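(* Let $e\in\mathbb{Z}_{\ge0}$ and let $A\subseteq\mathbb{R}^2$ be finite and not contained in any element of $\mathcal{C}_{\le e}$. Let $\mathcal{R}$ be the family of subsets $B\subseteq A$ with $|B|=\binom{e+2}{2}$ such that $B$ is not contained in any element of $\mathcal{C}_{\le e}$. Then \[ |\mathcal{R}|\geq\frac{1}{2^{\binom{e+2}{2}-1}}|A|. \]
   Context: For $k\in\mathbb{Z}^+$, a curve of degree $k$ is the zero set in $\mathbb{R}^2$ of a polynomial in $\mathbb{R}[x,y]$ of degree exactly $k$; $\mathcal{C}_k$ is the family of such curves, $\mathcal{C}_{\le k}:=\bigcup_{j=1}^k\mathcal{C}_j$, and $\mathcal{C}_{\le 0}:=\emptyset$. *)

theory Defs
  imports Complex_Main
begin

definition bipoly_eval :: "nat \<Rightarrow> (nat \<Rightarrow> nat \<Rightarrow> real) \<Rightarrow> real \<Rightarrow> real \<Rightarrow> real" where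
  "bipoly_eval k c x y = (\<Sum>i\<le>k. \<Sum>j\<le>k - i. c i j * x ^ i * y ^ j)"

definition curves_deg :: "nat \<Rightarrow> (real \<times> real) set set" where
  "curves_deg k = {Z. \<exists>c. (\<exists>i j. i + j = k \<and> c i j \<noteq> 0) \<and>
                       Z = {(x, y). bipoly_eval k c x y = 0}}"

definition curves_le :: "nat \<Rightarrow> (real \<times> real) set set" where
  "curves_le e = (\<Union>j\<in>{1..e}. curves_deg j)"

end

theory Submission
  imports Defs "HOL-Library.Function_Algebras" "HOL-Library.Indicator_Function"
begin

text \<open>Encode a polynomial of degree at most e by its coefficient vector, a function on the
  N = (e+2 choose 2) exponents (i, j) with i + j \<le> e, and a point p by its vector of
  monomial values (the Veronese map). A nonempty set B of points lies on no curve of degree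
  at most e iff no nonzero coefficient vector is orthogonal to all Veronese vectors of B,
  i.e. iff these vectors span the N-dimensional coefficient space. The Veronese vectors of
  A span, so N of them form a basis B0, and by the exchange lemma every further point x of A
  can be swapped into B0 for one of its elements. The resulting card A - N spanning N-subsets
  are distinct from each other and from B0, since they differ from B0 exactly in x. Hence
  the family has at least card A - N + 1 \<ge> card A / 2^(N-1) members.\<close>

lemma card_family_with_exchanges:
  assumes "finite A" "B0 \<subseteq> A" "B0 \<in> R" "R \<subseteq> Pow A"
    and exchange: "\<And>x. x \<in> A - B0 \<Longrightarrow> \<exists>y\<in>B0. insert x (B0 - {y}) \<in> R"
  shows "card A + 1 \<le> card R + card B0"
proof -
  obtain g where g: "\<And>x. x \<in> A - B0 \<Longrightarrow> insert x (B0 - {g x}) \<in> R"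
    using exchange by metis
  define h where "h x = insert x (B0 - {g x})" for x
  have h_diff: "h x - B0 = {x}" if "x \<in> A - B0" for x
    using that by (auto simp: h_def)
  have "inj_on h (A - B0)"
    by (rule inj_onI) (metis h_diff singleton_inject)
  moreover have "B0 \<notin> h ` (A - B0)"
    using h_diff by fastforce
  moreover have "insert B0 (h ` (A - B0)) \<subseteq> R"
    using assms(3) g by (auto simp: h_def)
  moreover have "finite R"
    using assms(1,4) finite_subset by blast
  ultimately have "card (A - B0) + 1 \<le> card R"
    by (metis card_image card_insert_disjoint card_mono Suc_eq_plus1 assms(1) finite_Diff
        finite_imageI)
  then show ?thesis
    using card_Diff_subset[OF finite_subset[OF assms(2,1)] assms(2)]
      card_mono[OF assms(1,2)] by linarith
qed

context vector_space
begin

lemma span_exchange: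
  assumes "finite S" "a \<in> span S" "a \<noteq> 0"
  obtains b where "b \<in> S" "span (insert a (S - {b})) = span S"
proof -
  obtain T where T: "T \<subseteq> S" "a \<in> span T"
    and T_min: "\<And>U. U \<subseteq> S \<and> a \<in> span U \<Longrightarrow> card T \<le> card U"
    using ex_has_least_nat[of "\<lambda>T. T \<subseteq> S \<and> a \<in> span T" S card] assms(2) by blast
  have "finite T"
    using T(1) assms(1) by (rule finite_subset)
  have "T \<noteq> {}"
    using T(2) assms(3) by auto
  then obtain b where b: "b \<in> T"
    by blast
  have "a \<notin> span (T - {b})"
  proof
    assume "a \<in> span (T - {b})"
    then have "card T \<le> card (T - {b})"
      using T(1) T_min by blast
    then show False
      using card_Diff1_less[OF \<open>finite T\<close> b] by linarith
  qed
  then have "b \<in> span (insert a (T - {b}))"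
    using T(2) by (rule in_span_delete[rotated])
  also have "\<dots> \<subseteq> span (insert a (S - {b}))"
    using T(1) by (intro span_mono) blast
  finally have "S \<subseteq> span (insert a (S - {b}))"
    by (auto intro: span_base)
  moreover have "insert a (S - {b}) \<subseteq> span S"
    using assms(2) by (auto intro: span_base)
  ultimately have "span (insert a (S - {b})) = span S"
    by (simp add: span_eq)
  then show ?thesis
    using that b T(1) by blast
qed

lemma card_spanning_subsets_ge:
  assumes "finite A" "0 \<notin> v ` A"
  shows "card A + 1 \<le>
    card {B. B \<subseteq> A \<and> card B = dim (v ` A) \<and> span (v ` B) = span (v ` A)} + dim (v ` A)"
proof -
  obtain T where T: "T \<subseteq> v ` A" "independent T" "v ` A \<subseteq> span T"
    by (rule maximal_independent_subset)
  then obtain B0 where B0: "B0 \<subseteq> A" "inj_on v B0" "T = v ` B0"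
    by (auto simp: subset_image_inj)
  have "finite B0"
    using B0(1) assms(1) by (rule finite_subset)
  have "v ` B0 \<subseteq> span (v ` A)"
    using image_mono[OF B0(1)] span_superset by (rule order_trans)
  then have span_B0: "span (v ` B0) = span (v ` A)"
    using T(3) B0(3) by (simp add: span_eq)
  have card_B0: "card B0 = dim (v ` A)"
    using dim_eq_card[OF span_B0] T(2) B0(2,3) by (simp add: card_image)
  let ?R = "{B. B \<subseteq> A \<and> card B = dim (v ` A) \<and> span (v ` B) = span (v ` A)}"
  have "card A + 1 \<le> card ?R + card B0"
  proof (rule card_family_with_exchanges)
    fix x
    assume x: "x \<in> A - B0"
    have "v x \<in> span (v ` B0)" "v x \<noteq> 0"
      using x span_B0 assms(2) by (auto intro: span_base)
    then obtain b where b: "b \<in> v ` B0" "span (insert (v x) (v ` B0 - {b})) = span (v ` B0)"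
      by (rule span_exchange[OF finite_imageI[OF \<open>finite B0\<close>]])
    then obtain y where y: "y \<in> B0" "b = v y"
      by blast
    have "v ` insert x (B0 - {y}) = insert (v x) (v ` B0 - {b})"
      using inj_on_image_set_diff[OF B0(2), of B0 "{y}"] y by simp
    then have "span (v ` insert x (B0 - {y})) = span (v ` A)"
      using b(2) span_B0 by simp
    moreover have "card (insert x (B0 - {y})) = card B0"
      using x y \<open>finite B0\<close> card_Diff1_less[of B0 y] by (simp add: card_insert_if)
    ultimately have "insert x (B0 - {y}) \<in> ?R"
      using x B0(1) card_B0 by auto
    then show "\<exists>y\<in>B0. insert x (B0 - {y}) \<in> ?R"
      using y(1) by blast
  qed (use assms(1) B0(1) card_B0 span_B0 in auto)
  then show ?thesis
    using card_B0 by simp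
qed

end

instantiation "fun" :: (type, real_vector) real_vector
begin

definition scaleR_fun :: "real \<Rightarrow> ('a \<Rightarrow> 'b) \<Rightarrow> 'a \<Rightarrow> 'b" where
  "scaleR_fun r f = (\<lambda>x. r *\<^sub>R f x)"

instance
  by standard (simp_all add: scaleR_fun_def fun_eq_iff scaleR_add_right scaleR_add_left)

end

lemma sum_apply: "(\<Sum>i\<in>I. f i) x = (\<Sum>i\<in>I. f i x)"
  by (induction I rule: infinite_finite_induct) auto

definition supported_on :: "'a set \<Rightarrow> ('a \<Rightarrow> real) set" where
  "supported_on I = {f. \<forall>q. q \<notin> I \<longrightarrow> f q = 0}"

definition inner_on :: "'a set \<Rightarrow> ('a \<Rightarrow> real) \<Rightarrow> ('a \<Rightarrow> real) \<Rightarrow> real" where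
  "inner_on I c f = (\<Sum>q\<in>I. c q * f q)"

lemma subspace_supported_on: "subspace (supported_on I)"
  by (auto simp: subspace_def supported_on_def scaleR_fun_def)

lemma supported_on_sum_indicator:
  assumes "finite I" "f \<in> supported_on I"
  shows "f = (\<Sum>q\<in>I. f q *\<^sub>R indicator {q})"
  using assms
  by (auto simp: fun_eq_iff sum_apply scaleR_fun_def supported_on_def indicator_def Int_insert_right)

lemma span_indicators:
  assumes "finite I"
  shows "span ((\<lambda>q. indicator {q}) ` I) = supported_on I"
proof (rule span_subspace)
  show "(\<lambda>q. indicator {q}) ` I \<subseteq> supported_on I"
    by (auto simp: supported_on_def indicator_def)
  show "supported_on I \<subseteq> span ((\<lambda>q. indicator {q}) ` I)"
  proof
    fix f
    assume "f \<in> supported_on I"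
    then have "f = (\<Sum>q\<in>I. f q *\<^sub>R indicator {q})"
      by (rule supported_on_sum_indicator[OF assms])
    also have "\<dots> \<in> span ((\<lambda>q. indicator {q}) ` I)"
      by (intro span_sum span_scale span_base) auto
    finally show "f \<in> span ((\<lambda>q. indicator {q}) ` I)" .
  qed
qed (rule subspace_supported_on)

lemma inj_indicator_singleton: "inj (\<lambda>q. indicator {q} :: 'a \<Rightarrow> real)"
  by (rule injI) (metis indicator_simps(1) indicator_simps(2) singletonD singletonI zero_neq_one)

lemma independent_indicators:
  assumes "finite I"
  shows "independent ((\<lambda>q. indicator {q} :: 'a \<Rightarrow> real) ` I)"
proof (rule independent_if_scalars_zero)
  fix u :: "('a \<Rightarrow> real) \<Rightarrow> real" and v :: "'a \<Rightarrow> real"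
  assume sum0: "(\<Sum>w\<in>(\<lambda>q. indicator {q}) ` I. u w *\<^sub>R w) = 0"
    and v: "v \<in> (\<lambda>q. indicator {q}) ` I"
  then obtain q where "q \<in> I" "v = indicator {q}"
    by blast
  let ?f = "\<Sum>r\<in>I. u (indicator {r}) *\<^sub>R (indicator {r} :: 'a \<Rightarrow> real)"
  have "?f = 0"
    using sum0 sum.reindex[OF inj_on_subset[OF inj_indicator_singleton subset_UNIV], of "\<lambda>w. u w *\<^sub>R w" I]
    by (simp add: o_def)
  then have "0 = ?f q"
    by simp
  also have "\<dots> = u v"
    using \<open>q \<in> I\<close> \<open>v = indicator {q}\<close> assms
    by (simp add: sum_apply scaleR_fun_def indicator_def if_distrib sum.delta cong: if_cong)
  finally show "u v = 0" ..
qed (simp add: assms)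

lemma dim_supported_on:
  assumes "finite I"
  shows "dim (supported_on I) = card I"
proof -
  have "dim (supported_on I) = card ((\<lambda>q. indicator {q} :: 'a \<Rightarrow> real) ` I)"
    using dim_span_eq_card_independent[OF independent_indicators[OF assms]]
    by (simp add: span_indicators[OF assms])
  also have "\<dots> = card I"
    by (rule card_image[OF inj_on_subset[OF inj_indicator_singleton subset_UNIV]])
  finally show ?thesis .
qed

lemma linear_inner_on: "linear (inner_on I c)"
  by (rule linearI) (auto simp: inner_on_def scaleR_fun_def sum.distrib sum_distrib_left algebra_simps)

lemma inner_on_represents_linear:
  assumes "finite I" "linear \<phi>" "f \<in> supported_on I"
  shows "inner_on I (\<lambda>q. \<phi> (indicator {q})) f = \<phi> f"
proof -
  have "\<phi> f = \<phi> (\<Sum>q\<in>I. f q *\<^sub>R indicator {q})"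
    using supported_on_sum_indicator[OF assms(1,3)] by simp
  also have "\<dots> = inner_on I (\<lambda>q. \<phi> (indicator {q})) f"
    using assms(2) by (simp add: inner_on_def linear_sum linear_scale mult.commute)
  finally show ?thesis ..
qed

lemma annihilator_exists:
  assumes "finite I" "V \<subseteq> supported_on I" "span V \<noteq> supported_on I"
  obtains c where "c \<in> supported_on I" "c \<noteq> 0" "\<forall>v\<in>V. inner_on I c v = 0"
proof -
  have "span V \<subseteq> supported_on I"
    using assms(2) subspace_supported_on by (rule span_minimal)
  then obtain w where w: "w \<in> supported_on I" "w \<notin> span V"
    using assms(3) by blast
  obtain B where B: "B \<subseteq> V" "independent B" "V \<subseteq> span B"
    by (rule maximal_independent_subset)
  have "w \<notin> span B"
    using w(2) span_mono[OF B(1)] by blast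
  then have indep: "independent (insert w B)"
    using B(2) by (rule independent_insertI)
  define \<phi> where "\<phi> = construct (insert w B) (\<lambda>b. if b = w then 1 else 0 :: real)"
  have "linear \<phi>"
    unfolding \<phi>_def using indep by (rule linear_construct)
  define c where "c q = (if q \<in> I then \<phi> (indicator {q}) else 0)" for q
  have inner_c: "inner_on I c f = \<phi> f" if "f \<in> supported_on I" for f
    using inner_on_represents_linear[OF assms(1) \<open>linear \<phi>\<close> that]
    by (simp add: inner_on_def c_def)
  have \<phi>_V: "\<phi> v = 0" if "v \<in> V" for v
  proof (rule linear_eq_0_on_span[OF \<open>linear \<phi>\<close>])
    show "\<phi> b = 0" if "b \<in> B" for b
      using that indep \<open>w \<notin> span B\<close> span_superset by (auto simp: \<phi>_def construct_basis)
  qed (use that B(3) in blast)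
  have "c \<in> supported_on I"
    by (simp add: c_def supported_on_def)
  moreover have "inner_on I c w = 1"
    using inner_c[OF w(1)] indep by (simp add: \<phi>_def construct_basis)
  then have "c \<noteq> 0"
    by (auto simp: inner_on_def)
  moreover have "\<forall>v\<in>V. inner_on I c v = 0"
    using inner_c \<phi>_V assms(2) by auto
  ultimately show ?thesis
    using that by blast
qed

lemma span_eq_supported_on_iff:
  assumes "finite I" "V \<subseteq> supported_on I"
  shows "span V = supported_on I \<longleftrightarrow> (\<forall>c\<in>supported_on I. (\<forall>v\<in>V. inner_on I c v = 0) \<longrightarrow> c = 0)"
proof
  assume span_V: "span V = supported_on I"
  show "\<forall>c\<in>supported_on I. (\<forall>v\<in>V. inner_on I c v = 0) \<longrightarrow> c = 0"
  proof (intro ballI impI)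
    fix c
    assume c: "c \<in> supported_on I" and orth: "\<forall>v\<in>V. inner_on I c v = 0"
    have "inner_on I c c = 0"
      using linear_eq_0_on_span[OF linear_inner_on] orth c span_V by blast
    then have "\<forall>q\<in>I. c q * c q = 0"
      using assms(1) by (simp add: inner_on_def sum_nonneg_eq_0_iff)
    then show "c = 0"
      using c by (auto simp: supported_on_def fun_eq_iff)
  qed
next
  show "span V = supported_on I" if "\<forall>c\<in>supported_on I. (\<forall>v\<in>V. inner_on I c v = 0) \<longrightarrow> c = 0"
    using annihilator_exists[OF assms] that by metis
qed

definition monomials :: "nat \<Rightarrow> (nat \<times> nat) set" where
  "monomials e = {(i, j). i + j \<le> e}"

definition veronese :: "nat \<Rightarrow> real \<times> real \<Rightarrow> nat \<times> nat \<Rightarrow> real" where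
  "veronese e p = (\<lambda>(i, j). if i + j \<le> e then fst p ^ i * snd p ^ j else 0)"

definition poly_zeros :: "nat \<Rightarrow> (nat \<times> nat \<Rightarrow> real) \<Rightarrow> (real \<times> real) set" where
  "poly_zeros e c = {p. inner_on (monomials e) c (veronese e p) = 0}"

lemma finite_monomials: "finite (monomials e)"
  by (rule finite_subset[of _ "{..e} \<times> {..e}"]) (auto simp: monomials_def)

lemma card_monomials: "card (monomials e) = (e + 2) choose 2"
proof (induction e)
  case 0
  have "monomials 0 = {(0, 0)}"
    by (auto simp: monomials_def)
  then show ?case
    by (simp add: numeral_2_eq_2)
next
  case (Suc e)
  let ?diagonal = "(\<lambda>i. (i, Suc e - i)) ` {0..Suc e}"
  have "monomials (Suc e) = monomials e \<union> ?diagonal"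
    by (auto simp: monomials_def image_iff)
  moreover have "monomials e \<inter> ?diagonal = {}"
    by (auto simp: monomials_def)
  moreover have "card ?diagonal = e + 2"
    by (subst card_image) (auto simp: inj_on_def)
  ultimately have "card (monomials (Suc e)) = card (monomials e) + (e + 2)"
    by (simp add: card_Un_disjoint finite_monomials)
  then show ?case
    using Suc.IH by (simp add: numeral_2_eq_2)
qed

lemma veronese_in_supported_on: "veronese e p \<in> supported_on (monomials e)"
  by (auto simp: veronese_def supported_on_def monomials_def)

lemma veronese_nonzero: "veronese e p \<noteq> 0"
proof
  assume "veronese e p = 0"
  then have "veronese e p (0, 0) = 0"
    by simp
  then show False
    by (simp add: veronese_def)
qed

lemma poly_zeros_lower_degree:
  assumes "k \<le> e" "c \<in> supported_on (monomials k)"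
  shows "poly_zeros e c = poly_zeros k c"
proof -
  have sub: "monomials k \<subseteq> monomials e"
    using assms(1) by (auto simp: monomials_def)
  have "inner_on (monomials e) c (veronese e p) = inner_on (monomials k) c (veronese k p)" for p
  proof -
    have "inner_on (monomials e) c (veronese e p) = inner_on (monomials k) c (veronese e p)"
      unfolding inner_on_def using assms(2) sub finite_monomials
      by (intro sum.mono_neutral_right) (auto simp: supported_on_def)
    also have "\<dots> = inner_on (monomials k) c (veronese k p)"
      unfolding inner_on_def using assms(1)
      by (intro sum.cong) (auto simp: veronese_def monomials_def)
    finally show ?thesis .
  qed
  then show ?thesis
    by (simp add: poly_zeros_def)
qed

lemma bipoly_eval_eq_inner_on:
  "bipoly_eval k c x y = inner_on (monomials k) (\<lambda>(i, j). c i j) (veronese k (x, y))"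
proof -
  have "bipoly_eval k c x y = (\<Sum>(i, j)\<in>Sigma {..k} (\<lambda>i. {..k - i}). c i j * x ^ i * y ^ j)"
    unfolding bipoly_eval_def by (subst sum.Sigma) auto
  also have "Sigma {..k} (\<lambda>i. {..k - i}) = monomials k"
    by (auto simp: monomials_def)
  finally show ?thesis
    unfolding inner_on_def
    by (auto simp: veronese_def monomials_def mult.assoc intro!: sum.cong)
qed

lemma curves_le_poly_zeros:
  assumes "C \<in> curves_le e"
  obtains c where "c \<in> supported_on (monomials e)" "c \<noteq> 0" "C = poly_zeros e c"
proof -
  obtain k where k: "1 \<le> k" "k \<le> e" "C \<in> curves_deg k"
    using assms by (auto simp: curves_le_def)
  then obtain a i j where a: "i + j = k" "a i j \<noteq> 0" "C = {(x, y). bipoly_eval k a x y = 0}"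
    by (auto simp: curves_deg_def)
  define c where "c q = (if q \<in> monomials k then (\<lambda>(i, j). a i j) q else 0)" for q
  have c_k: "c \<in> supported_on (monomials k)"
    by (simp add: c_def supported_on_def)
  then have "c \<in> supported_on (monomials e)"
    using k(2) by (auto simp: supported_on_def monomials_def)
  moreover have "c \<noteq> 0"
  proof
    assume "c = 0"
    then have "c (i, j) = 0"
      by simp
    then show False
      using a(1,2) by (simp add: c_def monomials_def)
  qed
  moreover have "C = poly_zeros k c"
  proof -
    have "bipoly_eval k a x y = inner_on (monomials k) c (veronese k (x, y))" for x y
      unfolding bipoly_eval_eq_inner_on inner_on_def by (intro sum.cong) (auto simp: c_def)
    then show ?thesis
      unfolding a(3) poly_zeros_def by auto
  qed
  ultimately show ?thesis
    using that poly_zeros_lower_degree[OF k(2) c_k] by simp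
qed

text \<open>The degree of the curve is the least k with c supported on the monomials of degree at most k.
  It is positive because a nonzero constant has no zeros.\<close>

lemma poly_zeros_in_curves_le:
  assumes "c \<in> supported_on (monomials e)" "c \<noteq> 0" "poly_zeros e c \<noteq> {}"
  shows "poly_zeros e c \<in> curves_le e"
proof -
  define k where "k = (LEAST k. c \<in> supported_on (monomials k))"
  have c_k: "c \<in> supported_on (monomials k)"
    unfolding k_def using assms(1) by (rule LeastI)
  have "k \<le> e"
    unfolding k_def using assms(1) by (rule Least_le)
  have zeros_k: "poly_zeros e c = poly_zeros k c"
    using poly_zeros_lower_degree[OF \<open>k \<le> e\<close> c_k] .
  have "k \<noteq> 0"
  proof
    assume "k = 0"
    then have "monomials k = {(0, 0)}"
      by (auto simp: monomials_def)
    moreover have "c (0, 0) \<noteq> 0"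
    proof
      assume "c (0, 0) = 0"
      then have "c q = 0" for q
        using c_k \<open>monomials k = {(0, 0)}\<close> unfolding supported_on_def
        by (cases "q = (0, 0)") blast+
      then show False
        using assms(2) by (simp add: fun_eq_iff)
    qed
    ultimately have "poly_zeros k c = {}"
      by (simp add: poly_zeros_def inner_on_def veronese_def)
    then show False
      using zeros_k assms(3) by simp
  qed
  have "\<exists>i j. i + j = k \<and> c (i, j) \<noteq> 0"
  proof (rule ccontr)
    assume no_top: "\<nexists>i j. i + j = k \<and> c (i, j) \<noteq> 0"
    have "c q = 0" if "q \<notin> monomials (k - 1)" for q
    proof (cases "fst q + snd q = k")
      case True
      then show ?thesis
        using no_top by (metis prod.collapse)
    next
      case False
      then have "q \<notin> monomials k"
        using that by (cases q) (auto simp: monomials_def)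
      then show ?thesis
        using c_k unfolding supported_on_def by blast
    qed
    then have "c \<in> supported_on (monomials (k - 1))"
      by (simp add: supported_on_def)
    then show False
      using not_less_Least[of "k - 1" "\<lambda>k. c \<in> supported_on (monomials k)"] \<open>k \<noteq> 0\<close>
      unfolding k_def[symmetric] by simp
  qed
  then obtain i j where ij: "i + j = k" "c (i, j) \<noteq> 0"
    by blast
  have "poly_zeros k c = {(x, y). bipoly_eval k (\<lambda>i j. c (i, j)) x y = 0}"
    by (auto simp: poly_zeros_def bipoly_eval_eq_inner_on)
  then have "poly_zeros k c \<in> curves_deg k"
    unfolding curves_deg_def using ij
    by (intro CollectI exI[of _ "\<lambda>i j. c (i, j)"] conjI exI[of _ i] exI[of _ j])
  then show ?thesis
    using zeros_k \<open>k \<noteq> 0\<close> \<open>k \<le> e\<close> by (auto simp: curves_le_def)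
qed

lemma no_curve_iff_span_veronese:
  assumes "S \<noteq> {}"
  shows "\<not> (\<exists>C\<in>curves_le e. S \<subseteq> C) \<longleftrightarrow> span (veronese e ` S) = supported_on (monomials e)"
proof -
  have "(\<exists>C\<in>curves_le e. S \<subseteq> C) \<longleftrightarrow>
      (\<exists>c\<in>supported_on (monomials e). c \<noteq> 0 \<and> S \<subseteq> poly_zeros e c)"
  proof
    assume "\<exists>C\<in>curves_le e. S \<subseteq> C"
    then obtain C where "C \<in> curves_le e" "S \<subseteq> C"
      by blast
    obtain c where "c \<in> supported_on (monomials e)" "c \<noteq> 0" "C = poly_zeros e c"
      using \<open>C \<in> curves_le e\<close> by (rule curves_le_poly_zeros)
    then show "\<exists>c\<in>supported_on (monomials e). c \<noteq> 0 \<and> S \<subseteq> poly_zeros e c"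
      using \<open>S \<subseteq> C\<close> by blast
  next
    assume "\<exists>c\<in>supported_on (monomials e). c \<noteq> 0 \<and> S \<subseteq> poly_zeros e c"
    then obtain c where "c \<in> supported_on (monomials e)" "c \<noteq> 0" "S \<subseteq> poly_zeros e c"
      by blast
    moreover have "poly_zeros e c \<noteq> {}"
      using \<open>S \<subseteq> poly_zeros e c\<close> assms by blast
    ultimately show "\<exists>C\<in>curves_le e. S \<subseteq> C"
      using poly_zeros_in_curves_le by blast
  qed
  also have "\<dots> \<longleftrightarrow> \<not> (\<forall>c\<in>supported_on (monomials e).
      (\<forall>v\<in>veronese e ` S. inner_on (monomials e) c v = 0) \<longrightarrow> c = 0)"
    by (auto simp: poly_zeros_def)
  also have "\<dots> \<longleftrightarrow> span (veronese e ` S) \<noteq> supported_on (monomials e)"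
    using span_eq_supported_on_iff[OF finite_monomials, of "veronese e ` S" e] veronese_in_supported_on
    by blast
  finally show ?thesis
    by blast
qed

lemma real_div_two_pow_le:
  fixes n N :: nat
  assumes "1 \<le> N" "N \<le> n"
  shows "real n / 2 ^ (N - 1) \<le> real (n + 1 - N)"
proof -
  define P :: real where "P = 2 ^ (N - 1)"
  have "N \<le> (2 :: nat) ^ (N - 1)"
    using less_exp[of "N - 1"] assms(1) by linarith
  then have "real N \<le> P"
    unfolding P_def by (metis of_nat_le_iff of_nat_numeral of_nat_power)
  have "0 \<le> (real n - real N) * (P - 1)"
    using assms \<open>real N \<le> P\<close> by (intro mult_nonneg_nonneg) auto
  then have "real n \<le> real (n + 1 - N) * P"
    using assms(2) \<open>real N \<le> P\<close> by (simp add: of_nat_diff algebra_simps)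
  moreover have "0 < P"
    by (simp add: P_def)
  ultimately show ?thesis
    by (simp add: P_def divide_le_eq)
qed

theorem lemma16:
  fixes e :: nat and A :: "(real \<times> real) set"
  assumes "finite A"
    and "\<not> (\<exists>C\<in>curves_le e. A \<subseteq> C)"
  shows "real (card {B. B \<subseteq> A \<and> card B = (e + 2) choose 2 \<and> \<not> (\<exists>C\<in>curves_le e. B \<subseteq> C)})
           \<ge> real (card A) / 2 ^ (((e + 2) choose 2) - 1)"
proof (cases "A = {}")
  case False
  let ?N = "(e + 2) choose 2"
  let ?R = "{B. B \<subseteq> A \<and> card B = ?N \<and> \<not> (\<exists>C\<in>curves_le e. B \<subseteq> C)}"
  let ?S = "{B. B \<subseteq> A \<and> card B = ?N \<and> span (veronese e ` B) = span (veronese e ` A)}"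
  have span_A: "span (veronese e ` A) = supported_on (monomials e)"
    using no_curve_iff_span_veronese[OF False] assms(2) by blast
  then have dim_A: "dim (veronese e ` A) = ?N"
    by (metis dim_span dim_supported_on finite_monomials card_monomials)
  have "1 \<le> ?N"
    using zero_less_binomial[of 2 "e + 2"] by linarith
  have "?N \<le> card A"
    using dim_le_card[OF span_superset finite_imageI[OF assms(1)], of "veronese e"]
      card_image_le[OF assms(1), of "veronese e"] dim_A by linarith
  have "card A + 1 \<le> card ?S + ?N"
    using card_spanning_subsets_ge[OF assms(1), of "veronese e"] veronese_nonzero[of e]
    by (simp add: dim_A image_iff)
  moreover have "?S \<subseteq> ?R"
  proof
    fix B
    assume "B \<in> ?S"
    moreover then have "B \<noteq> {}"
      using \<open>1 \<le> ?N\<close> by auto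
    ultimately show "B \<in> ?R"
      using no_curve_iff_span_veronese[of B e] span_A by auto
  qed
  then have "card ?S \<le> card ?R"
    by (rule card_mono[rotated]) (simp add: assms(1))
  ultimately have "real (card A + 1 - ?N) \<le> real (card ?R)"
    by linarith
  then show ?thesis
    using real_div_two_pow_le[OF \<open>1 \<le> ?N\<close> \<open>?N \<le> card A\<close>] by linarith
qed simp

end
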